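(* Let $\mathbb{C}^{1,n+1}$ be a complex vector space with basis $p_1,e_1,\dots,e_n,q_1$ and pseudo-Hermitian metric $g$ of signature $(1,n+1)$ with $g(p_1,q_1)=1$, $g(e_i,e_j)=\delta_{ij}$ and all other values on basis vectors zero. Let $\tilde E=\mathrm{span}_{\mathbb{C}}\{e_1,\dots,e_n\}$, and let $U(1,n+1)_{\mathbb{C}p_1}$ be the group of $g$-preserving complex linear automorphisms of $\mathbb{C}^{1,n+1}$ preserving the line $\mathbb{C}p_1$. For every $f\in U(1,n+1)_{\mathbb{C}p_1}$ let $\phi_f:\tilde E\to\tilde E$ be the map defined by $w(f(\ell))=\phi_f(w(\ell))$ for every isotropic complex line $\ell\neq\mathbb{C}p_1$ (see context). Let $G\subset U(1,n+1)_{\mathbb{C}p_1}$ be a subgroup that acts weakly irreducibly on $\mathbb{C}^{1,n+1}$, and let $F=\{\phi_f: f\in G\}$. Then: (1) $F$ does not preserve any proper complex affine subspace of $\tilde E$; (2) if $F$ preserves a proper affine subspace $L\subset\tilde E$ that is not complex, then the minimal complex affine subspace of $\tilde E$ containing $L$ is $\tilde E$.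
   Context: Every isotropic complex line $\ell\neq\mathbb{C}p_1$ contains a unique vector of the form $tp_1+w+q_1$ with $t\in\mathbb{C}$, $w\in\tilde E$; set $w(\ell)=w$. Every $w\in\tilde E$ arises this way. Each $f\in U(1,n+1)_{\mathbb{C}p_1}$ maps isotropic lines to isotropic lines and fixes $\mathbb{C}p_1$, and $w(f(\ell))$ depends only on $w(\ell)$, so $\phi_f$ is well defined; it is a similarity transformation of the Hermitian space $\tilde E$ (of the form $w\mapsto\mu Aw+b$ with $\mu\in\mathbb{C}^*$, $A$ unitary, $b\in\tilde E$). (This is the composition of the paper's homomorphism $\Gamma$ to the Heisenberg similarity group with the projection $\pi$ to $\mathrm{Sim}\,\tilde E$.) $G$ acts weakly irreducibly on $\mathbb{C}^{1,n+1}$ if it preserves no proper nonzero complex subspace on which $g$ is nondegenerate. An affine subspace of $\tilde E$ (viewed as real affine space) is called complex if its underlying real vector subspace is invariant under multiplication by $i$. *)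

theory Defs
  imports "HOL-Analysis.Analysis"
begin

text \<open>The space C^{1,n+1}: a vector t p1 + w + s q1 is represented by the triple (t, w, s),
  where w \<in> E~ = complex^'n (coordinates w.r.t. e_1..e_n).\<close>

type_synonym 'n amb = "complex \<times> (complex ^ 'n) \<times> complex"

definition csmul :: "complex \<Rightarrow> 'n::finite amb \<Rightarrow> 'n::finite amb" where
  "csmul c x = (c * fst x, c *s fst (snd x), c * snd (snd x))"

definition gmet :: "'n::finite amb \<Rightarrow> 'n::finite amb \<Rightarrow> complex" where
  "gmet x y = fst x * cnj (snd (snd y)) + snd (snd x) * cnj (fst y)
             + (\<Sum>i\<in>UNIV. fst (snd x) $ i * cnj (fst (snd y) $ i))"

definition p1 :: "'n::finite amb" where "p1 = (1, 0, 0)"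

definition cline :: "'n::finite amb \<Rightarrow> 'n::finite amb set" where
  "cline v = range (\<lambda>c. csmul c v)"

definition clinear_map :: "('n::finite amb \<Rightarrow> 'n::finite amb) \<Rightarrow> bool" where
  "clinear_map f \<longleftrightarrow> (\<forall>x y. f (x + y) = f x + f y) \<and> (\<forall>c x. f (csmul c x) = csmul c (f x))"

definition U_p1 :: "('n::finite amb \<Rightarrow> 'n::finite amb) set" where
  "U_p1 = {f. clinear_map f \<and> bij f \<and> (\<forall>x y. gmet (f x) (f y) = gmet x y)
              \<and> f ` cline p1 = cline p1}"

definition is_subgroup_U :: "('n::finite amb \<Rightarrow> 'n::finite amb) set \<Rightarrow> bool" where
  "is_subgroup_U G \<longleftrightarrow> G \<subseteq> U_p1 \<and> id \<in> G \<and> (\<forall>f\<in>G. \<forall>h\<in>G. f \<circ> h \<in> G)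
     \<and> (\<forall>f\<in>G. inv f \<in> G)"

definition csubspace_amb :: "'n::finite amb set \<Rightarrow> bool" where
  "csubspace_amb V \<longleftrightarrow> 0 \<in> V \<and> (\<forall>x\<in>V. \<forall>y\<in>V. x + y \<in> V) \<and> (\<forall>c. \<forall>x\<in>V. csmul c x \<in> V)"

definition nondeg_on :: "'n::finite amb set \<Rightarrow> bool" where
  "nondeg_on V \<longleftrightarrow> (\<forall>x\<in>V. (\<forall>y\<in>V. gmet x y = 0) \<longrightarrow> x = 0)"

definition weakly_irreducible :: "('n::finite amb \<Rightarrow> 'n::finite amb) set \<Rightarrow> bool" where
  "weakly_irreducible G \<longleftrightarrow>
     \<not> (\<exists>V. csubspace_amb V \<and> V \<noteq> {0} \<and> V \<noteq> UNIV \<and> nondeg_on V \<and> (\<forall>f\<in>G. f ` V = V))"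

definition iso_line :: "'n::finite amb set \<Rightarrow> bool" where
  "iso_line l \<longleftrightarrow> (\<exists>v. v \<noteq> 0 \<and> gmet v v = 0 \<and> l = cline v)"

definition wl :: "'n::finite amb set \<Rightarrow> complex ^ 'n::finite" where
  "wl l = (THE w. \<exists>t. (t, w, 1) \<in> l)"

definition phi :: "('n::finite amb \<Rightarrow> 'n::finite amb) \<Rightarrow> complex ^ 'n::finite \<Rightarrow> complex ^ 'n::finite" where
  "phi f w = (THE w'. \<forall>l. iso_line l \<and> l \<noteq> cline p1 \<and> wl l = w \<longrightarrow> wl (f ` l) = w')"

text \<open>Nonempty (real) affine subspace of E~ whose direction space is invariant under i.\<close>
definition complex_affine :: "(complex ^ 'n::finite) set \<Rightarrow> bool" where
  "complex_affine L \<longleftrightarrow> affine L \<and> L \<noteq> {} \<and> (\<forall>x\<in>L. \<forall>y\<in>L. x + \<i> *s (y - x) \<in> L)"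

definition complex_affine_hull :: "(complex ^ 'n::finite) set \<Rightarrow> (complex ^ 'n::finite) set" where
  "complex_affine_hull L = \<Inter> {M. complex_affine M \<and> L \<subseteq> M}"

end

theory Submission
  imports Defs
begin

text \<open>
  Writing f p1 = a p1 (a \<noteq> 0), the metric forces the q1-coefficient of f x to be that of x
  divided by cnj a, and the E~-component of f x is, up to the factor 1/cnj a, a complex linear
  function B of the E~-component of x plus the q1-coefficient of x times a vector d. Hence
  phi_f w = B w + d is complex affine.

  (1) If a complex affine subspace w0 + W of E~ is invariant under all phi_f, f \<in> G, then the
  complex subspace of C^{1,n+1} spanned by p1, w0 + q1 and W is G-invariant. It is
  nondegenerate: a vector orthogonal to it is orthogonal to p1, to its own E~-component and to
  w0 + q1, which kills its three coordinates in turn. It is nonzero, and proper as soon as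
  w0 + W is, so weak irreducibility forces w0 + W = E~.

  (2) Preimages of complex affine subspaces under the complex affine maps phi_f are complex
  affine, so the complex affine hull of a nonempty invariant set is invariant again, and by (1)
  it is E~.
\<close>

lemma clinear_map_add: "clinear_map f \<Longrightarrow> f (x + y) = f x + f y"
  unfolding clinear_map_def by blast

lemma clinear_map_csmul: "clinear_map f \<Longrightarrow> f (csmul c x) = csmul c (f x)"
  unfolding clinear_map_def by blast

lemma clinear_map_zero: "clinear_map f \<Longrightarrow> f 0 = 0"
  using clinear_map_add[of f 0 0] by simp

lemma U_p1_clinear_map: "f \<in> U_p1 \<Longrightarrow> clinear_map f"
  and U_p1_bij: "f \<in> U_p1 \<Longrightarrow> bij f"
  and U_p1_gmet: "f \<in> U_p1 \<Longrightarrow> gmet (f x) (f y) = gmet x y"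
  and U_p1_image_cline_p1: "f \<in> U_p1 \<Longrightarrow> f ` cline p1 = cline p1"
  unfolding U_p1_def by blast+

lemma image_cline: "clinear_map f \<Longrightarrow> f ` cline v = cline (f v)"
  unfolding cline_def by (auto simp: clinear_map_csmul image_iff)

lemma cline_csmul:
  assumes "c \<noteq> 0"
  shows "cline (csmul c v) = cline v"
  unfolding cline_def
proof (intro equalityI subsetI)
  fix x assume "x \<in> range (\<lambda>d. csmul d (csmul c v))"
  then obtain d where "x = csmul d (csmul c v)" by blast
  then show "x \<in> range (\<lambda>d. csmul d v)"
    by (intro range_eqI[of _ _ "d * c"]) (simp add: csmul_def)
next
  fix x assume "x \<in> range (\<lambda>d. csmul d v)"
  then obtain d where "x = csmul d v" by blast
  then show "x \<in> range (\<lambda>d. csmul d (csmul c v))"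
    using assms by (intro range_eqI[of _ _ "d / c"]) (simp add: csmul_def)
qed

lemma is_subgroup_U_U_p1: "is_subgroup_U G \<Longrightarrow> f \<in> G \<Longrightarrow> f \<in> U_p1"
  and is_subgroup_U_inv: "is_subgroup_U G \<Longrightarrow> f \<in> G \<Longrightarrow> inv f \<in> G"
  unfolding is_subgroup_U_def by blast+

lemma U_p1_image_p1:
  assumes f: "f \<in> U_p1"
  obtains a where "f p1 = (a, 0, 0)"
proof -
  have "p1 \<in> cline p1"
    unfolding cline_def by (rule range_eqI[of _ _ 1]) (simp add: csmul_def p1_def)
  then have "f p1 \<in> cline p1"
    using U_p1_image_cline_p1[OF f] by blast
  with that show ?thesis
    unfolding cline_def by (auto simp: csmul_def p1_def)
qed

lemma U_p1_fst_image_p1: "f \<in> U_p1 \<Longrightarrow> fst (f p1) \<noteq> 0"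
proof
  assume f: "f \<in> U_p1" and "fst (f p1) = 0"
  obtain a where a: "f p1 = (a, 0, 0)"
    by (rule U_p1_image_p1[OF f])
  with \<open>fst (f p1) = 0\<close> have "f p1 = f 0"
    using clinear_map_zero[OF U_p1_clinear_map[OF f]] by (simp add: zero_prod_def)
  then have "p1 = (0 :: 'a amb)"
    using U_p1_bij[OF f] by (simp add: bij_def inj_eq)
  then show False
    by (simp add: p1_def zero_prod_def)
qed

lemma U_p1_last_coord:
  assumes f: "f \<in> U_p1"
  shows "snd (snd (f x)) * cnj (fst (f p1)) = snd (snd x)"
proof -
  obtain a where a: "f p1 = (a, 0, 0)"
    by (rule U_p1_image_p1[OF f])
  have "gmet (f x) (a, 0, 0) = gmet x p1"
    using U_p1_gmet[OF f, of x p1] a by simp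
  then show ?thesis
    unfolding a by (simp add: gmet_def p1_def)
qed

definition phi_linear :: "('n::finite amb \<Rightarrow> 'n amb) \<Rightarrow> complex ^ 'n \<Rightarrow> complex ^ 'n" where
  "phi_linear f w = cnj (fst (f p1)) *s fst (snd (f (0, w, 0)))"

definition phi_translation :: "('n::finite amb \<Rightarrow> 'n amb) \<Rightarrow> complex ^ 'n" where
  "phi_translation f = cnj (fst (f p1)) *s fst (snd (f (0, 0, 1)))"

lemma linear_phi_linear:
  fixes f :: "'n::finite amb \<Rightarrow> 'n amb"
  assumes f: "clinear_map f"
  shows "Vector_Spaces.linear (*s) (*s) (phi_linear f)"
proof -
  have "f (0, x + y, 0) = f (0, x, 0) + f (0, y, 0)" for x y :: "complex ^ 'n"
    using clinear_map_add[OF f, of "(0, x, 0)" "(0, y, 0)"] by simp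
  moreover have "f (0, c *s x, 0) = csmul c (f (0, x, 0))" for c and x :: "complex ^ 'n"
    using clinear_map_csmul[OF f, of c "(0, x, 0)"] by (simp add: csmul_def)
  ultimately show ?thesis
    unfolding Vector_Spaces.linear_iff phi_linear_def
    by (simp add: vec.vector_space_axioms csmul_def vec_eq_iff algebra_simps)
qed

lemma U_p1_middle_coord:
  assumes f: "f \<in> U_p1"
  shows "cnj (fst (f p1)) *s fst (snd (f x))
           = phi_linear f (fst (snd x)) + snd (snd x) *s phi_translation f"
proof -
  obtain a where a: "f p1 = (a, 0, 0)"
    by (rule U_p1_image_p1[OF f])
  have "x = csmul (fst x) p1 + (0, fst (snd x), 0) + csmul (snd (snd x)) (0, 0, 1)"
    by (simp add: csmul_def p1_def prod_eq_iff)
  then have "f x = csmul (fst x) (f p1) + f (0, fst (snd x), 0) + csmul (snd (snd x)) (f (0, 0, 1))"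
    using clinear_map_add[OF U_p1_clinear_map[OF f]] clinear_map_csmul[OF U_p1_clinear_map[OF f]]
    by metis
  then show ?thesis
    using a by (simp add: phi_linear_def phi_translation_def csmul_def vec_eq_iff algebra_simps)
qed

lemma wl_cline:
  assumes "snd (snd v) \<noteq> 0"
  shows "wl (cline v) = inverse (snd (snd v)) *s fst (snd v)"
  unfolding wl_def
proof (rule the_equality)
  have "csmul (inverse (snd (snd v))) v
          = (inverse (snd (snd v)) * fst v, inverse (snd (snd v)) *s fst (snd v), 1)"
    using assms by (simp add: csmul_def)
  then show "\<exists>t. (t, inverse (snd (snd v)) *s fst (snd v), 1) \<in> cline v"
    unfolding cline_def by (metis rangeI)
next
  fix w assume "\<exists>t. (t, w, 1) \<in> cline v"
  then obtain t c where "(t, w, 1) = csmul c v"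
    unfolding cline_def by auto
  then have "c * snd (snd v) = 1" "w = c *s fst (snd v)"
    by (auto simp: csmul_def)
  then show "w = inverse (snd (snd v)) *s fst (snd v)"
    using assms by (simp add: field_simps)
qed

lemma wl_image_cline:
  assumes f: "f \<in> U_p1" and v: "snd (snd v) \<noteq> 0"
  shows "wl (f ` cline v) = phi_linear f (wl (cline v)) + phi_translation f"
proof -
  interpret B: Vector_Spaces.linear "(*s)" "(*s)" "phi_linear f"
    using linear_phi_linear[OF U_p1_clinear_map[OF f]] .
  let ?a = "cnj (fst (f p1))"
  have a: "?a \<noteq> 0"
    using U_p1_fst_image_p1[OF f] by simp
  have fv: "snd (snd (f v)) = snd (snd v) / ?a"
    using U_p1_last_coord[OF f, of v] a by (simp add: field_simps)
  have fv0: "snd (snd (f v)) \<noteq> 0"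
    using fv a v by simp
  have "wl (f ` cline v) = inverse (snd (snd (f v))) *s fst (snd (f v))"
    by (simp only: image_cline[OF U_p1_clinear_map[OF f]] wl_cline[OF fv0])
  also have "inverse (snd (snd (f v))) = inverse (snd (snd v)) * ?a"
    by (simp add: fv divide_inverse mult.commute)
  also have "(inverse (snd (snd v)) * ?a) *s fst (snd (f v))
               = inverse (snd (snd v)) *s (?a *s fst (snd (f v)))"
    by simp
  also have "\<dots> = inverse (snd (snd v))
                   *s (phi_linear f (fst (snd v)) + snd (snd v) *s phi_translation f)"
    using U_p1_middle_coord[OF f] by simp
  also have "\<dots> = phi_linear f (wl (cline v)) + phi_translation f"
    using v by (simp add: wl_cline B.scale)
  finally show ?thesis .
qed

lemma sum_mult_cnj_eq_norm:
  fixes w :: "complex ^ 'n::finite"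
  shows "(\<Sum>i\<in>UNIV. w$i * cnj (w$i)) = of_real ((norm w)\<^sup>2)"
proof -
  have "(norm w)\<^sup>2 = (\<Sum>i\<in>UNIV. (Re (w$i))\<^sup>2 + (Im (w$i))\<^sup>2)"
    unfolding dot_square_norm[symmetric] by (simp add: inner_vec_def inner_complex_def power2_eq_square)
  then show ?thesis
    by (simp add: complex_mult_cnj)
qed

lemma iso_line_cline_last_coord_nonzero:
  assumes "iso_line l" "l \<noteq> cline p1"
  obtains v where "l = cline v" "snd (snd v) \<noteq> 0"
proof -
  obtain v where v: "v \<noteq> 0" "gmet v v = 0" "l = cline v"
    using assms(1) unfolding iso_line_def by blast
  have "snd (snd v) \<noteq> 0"
  proof
    assume s: "snd (snd v) = 0"
    then have "fst (snd v) = 0"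
      using v(2) by (simp add: gmet_def sum_mult_cnj_eq_norm)
    with s v(1) have "v = csmul (fst v) p1" "fst v \<noteq> 0"
      by (auto simp: csmul_def p1_def prod_eq_iff)
    then have "cline v = cline p1"
      by (metis cline_csmul)
    with assms(2) v(3) show False by simp
  qed
  with v(3) that show ?thesis by blast
qed

definition null_lift :: "complex ^ 'n \<Rightarrow> 'n::finite amb" where
  "null_lift w = (- (\<Sum>i\<in>UNIV. w$i * cnj (w$i)) / 2, w, 1)"

lemma iso_line_cline_null_lift: "iso_line (cline (null_lift w))"
proof -
  have "cnj (\<Sum>i\<in>UNIV. w$i * cnj (w$i)) = (\<Sum>i\<in>UNIV. w$i * cnj (w$i))"
    by (simp add: mult.commute)
  then have "gmet (null_lift w) (null_lift w) = 0"
    by (simp add: gmet_def null_lift_def field_simps)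
  moreover have "null_lift w \<noteq> 0"
    by (simp add: null_lift_def zero_prod_def)
  ultimately show ?thesis
    unfolding iso_line_def by blast
qed

lemma cline_null_lift_neq_cline_p1: "cline (null_lift w) \<noteq> cline p1"
proof
  assume "cline (null_lift w) = cline p1"
  moreover have "null_lift w \<in> cline (null_lift w)"
    unfolding cline_def by (rule range_eqI[of _ _ 1]) (simp add: csmul_def)
  ultimately show False
    unfolding cline_def by (auto simp: csmul_def null_lift_def p1_def)
qed

lemma wl_cline_null_lift: "wl (cline (null_lift w)) = w"
  by (simp add: wl_cline null_lift_def)

lemma phi_eq:
  assumes f: "f \<in> U_p1"
  shows "phi f w = phi_linear f w + phi_translation f"
proof -
  have lines: "\<forall>l. iso_line l \<and> l \<noteq> cline p1 \<and> wl l = w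
                  \<longrightarrow> wl (f ` l) = phi_linear f w + phi_translation f"
    by (metis iso_line_cline_last_coord_nonzero wl_image_cline[OF f])
  show ?thesis
    unfolding phi_def
  proof (rule the_equality)
    \<comment> \<open>the line through the null lift of w makes the defining condition non-vacuous\<close>
    fix w' assume "\<forall>l. iso_line l \<and> l \<noteq> cline p1 \<and> wl l = w \<longrightarrow> wl (f ` l) = w'"
    with lines show "w' = phi_linear f w + phi_translation f"
      using iso_line_cline_null_lift cline_null_lift_neq_cline_p1 wl_cline_null_lift by metis
  qed (fact lines)
qed

lemma scaleR_vec_eq_of_real_smult: "r *\<^sub>R (v :: complex ^ 'n) = (of_real r :: complex) *s v"
  by (simp add: vec_eq_iff) (simp add: scaleR_conv_of_real)

lemma complex_affine_iff:
  "complex_affine L \<longleftrightarrow> L \<noteq> {} \<and> (\<forall>x\<in>L. \<forall>y\<in>L. \<forall>c. x + c *s (y - x) \<in> L)"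
proof
  assume L: "complex_affine L"
  have "x + c *s (y - x) \<in> L" if "x \<in> L" "y \<in> L" for x y c
  proof -
    have W: "subspace ((\<lambda>z. z - x) ` L)"
      using L that(1) unfolding complex_affine_def by (blast intro: affine_diffs_subspace_subtract)
    have "y - x \<in> (\<lambda>z. z - x) ` L" "\<i> *s (y - x) \<in> (\<lambda>z. z - x) ` L"
      using L that unfolding complex_affine_def
      by (auto intro!: image_eqI[of _ _ "x + \<i> *s (y - x)"])
    then have "Re c *\<^sub>R (y - x) + Im c *\<^sub>R (\<i> *s (y - x)) \<in> (\<lambda>z. z - x) ` L"
      by (intro subspace_add subspace_scale W)
    moreover have "Re c *\<^sub>R (y - x) + Im c *\<^sub>R (\<i> *s (y - x))
                     = (of_real (Re c) + of_real (Im c) * \<i>) *s (y - x)"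
      by (simp add: scaleR_vec_eq_of_real_smult vec_eq_iff algebra_simps)
    also have "of_real (Re c) + of_real (Im c) * \<i> = c"
      by (simp add: complex_eq_iff)
    ultimately show ?thesis
      by auto
  qed
  with L show "L \<noteq> {} \<and> (\<forall>x\<in>L. \<forall>y\<in>L. \<forall>c. x + c *s (y - x) \<in> L)"
    unfolding complex_affine_def by blast
next
  assume L: "L \<noteq> {} \<and> (\<forall>x\<in>L. \<forall>y\<in>L. \<forall>c. x + c *s (y - x) \<in> L)"
  have "(1 - u) *\<^sub>R x + u *\<^sub>R y \<in> L" if "x \<in> L" "y \<in> L" for x y u
  proof -
    have "(1 - u) *\<^sub>R x + u *\<^sub>R y = x + of_real u *s (y - x)"
      by (simp add: scaleR_vec_eq_of_real_smult vec_eq_iff algebra_simps)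
    with L that show ?thesis
      by simp
  qed
  with L show "complex_affine L"
    unfolding complex_affine_def affine_alt by blast
qed

lemma complex_affine_translate_subspace:
  assumes L: "complex_affine L" and w0: "w0 \<in> L"
  shows "vec.subspace {u. w0 + u \<in> L}"
proof -
  have "{u. w0 + u \<in> L} = (\<lambda>x. (- w0) + x) ` L"
    by (force simp: image_iff)
  moreover have "subspace ((\<lambda>x. (- w0) + x) ` L)"
    using L w0 unfolding complex_affine_def by (blast intro: affine_diffs_subspace)
  ultimately have S: "subspace {u. w0 + u \<in> L}"
    by simp
  have "w0 + (u + v) \<in> L" if "w0 + u \<in> L" "w0 + v \<in> L" for u v
    using subspace_add[OF S] that by simp
  moreover have "w0 + c *s u \<in> L" if "w0 + u \<in> L" for c u
  proof -
    have "w0 + c *s ((w0 + u) - w0) \<in> L"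
      using L w0 that unfolding complex_affine_iff by blast
    then show ?thesis
      by simp
  qed
  ultimately show ?thesis
    unfolding vec.subspace_def using w0 by simp
qed

lemma complex_affine_vimage:
  assumes B: "Vector_Spaces.linear (*s) (*s) B" and M: "complex_affine M"
    and ne: "(\<lambda>w. B w + d) -` M \<noteq> {}"
  shows "complex_affine ((\<lambda>w. B w + d) -` M)"
proof -
  interpret B: Vector_Spaces.linear "(*s)" "(*s)" B by (fact B)
  show ?thesis
    unfolding complex_affine_iff
  proof (intro conjI ballI allI)
    fix x y c assume "x \<in> (\<lambda>w. B w + d) -` M" "y \<in> (\<lambda>w. B w + d) -` M"
    then have "(B x + d) + c *s ((B y + d) - (B x + d)) \<in> M"
      using M unfolding complex_affine_iff by blast
    moreover have "B (x + c *s (y - x)) + d = (B x + d) + c *s ((B y + d) - (B x + d))"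
      by (simp add: B.add B.scale B.diff)
    ultimately show "x + c *s (y - x) \<in> (\<lambda>w. B w + d) -` M"
      by (simp only: vimage_eq)
  qed (fact ne)
qed

lemma subset_complex_affine_hull: "L \<subseteq> complex_affine_hull L"
  unfolding complex_affine_hull_def by blast

lemma complex_affine_complex_affine_hull:
  assumes "L \<noteq> {}"
  shows "complex_affine (complex_affine_hull L)"
  using assms subset_complex_affine_hull[of L]
  unfolding complex_affine_iff complex_affine_hull_def by blast

lemma complex_affine_hull_image_subset:
  assumes B: "Vector_Spaces.linear (*s) (*s) B" and ne: "L \<noteq> {}"
    and stable: "(\<lambda>w. B w + d) ` L \<subseteq> L"
  shows "(\<lambda>w. B w + d) ` complex_affine_hull L \<subseteq> complex_affine_hull L"
proof -
  have "complex_affine_hull L \<subseteq> (\<lambda>w. B w + d) -` M" if "complex_affine M" "L \<subseteq> M" for M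
  proof -
    have "L \<subseteq> (\<lambda>w. B w + d) -` M"
      using stable that(2) by blast
    with complex_affine_vimage[OF B that(1)] ne show ?thesis
      unfolding complex_affine_hull_def by blast
  qed
  then show ?thesis
    unfolding complex_affine_hull_def by blast
qed

text \<open>For a complex affine subspace L = w0 + W of E~, this is the span of p1 and of the
  isotropic lines l with w(l) \<in> L.\<close>
definition cone_subspace :: "complex ^ 'n \<Rightarrow> (complex ^ 'n) set \<Rightarrow> 'n::finite amb set" where
  "cone_subspace w0 W = {x. fst (snd x) - snd (snd x) *s w0 \<in> W}"

lemma csubspace_amb_cone_subspace:
  fixes W :: "(complex ^ 'n::finite) set"
  assumes W: "vec.subspace W"
  shows "csubspace_amb (cone_subspace w0 W)"
proof -
  have add: "fst (snd (x + y)) - snd (snd (x + y)) *s w0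
               = (fst (snd x) - snd (snd x) *s w0) + (fst (snd y) - snd (snd y) *s w0)"
    for x y :: "'n amb"
    by (simp add: vec_eq_iff algebra_simps)
  have scale: "fst (snd (csmul c x)) - snd (snd (csmul c x)) *s w0
                 = c *s (fst (snd x) - snd (snd x) *s w0)" for c and x :: "'n amb"
    by (simp add: csmul_def vec_eq_iff algebra_simps)
  show ?thesis
    unfolding csubspace_amb_def cone_subspace_def mem_Collect_eq add scale
    using W
    by (simp add: vec.subspace_0 vec.subspace_add vec.subspace_scale del: vector_ssub_ldistrib)
qed

lemma p1_in_cone_subspace: "vec.subspace W \<Longrightarrow> p1 \<in> cone_subspace w0 W"
  by (simp add: cone_subspace_def p1_def vec.subspace_0)

lemma nondeg_on_cone_subspace:
  assumes W: "vec.subspace W"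
  shows "nondeg_on (cone_subspace w0 W)"
  unfolding nondeg_on_def
proof (intro ballI impI)
  fix x assume x: "x \<in> cone_subspace w0 W" and orth: "\<forall>y\<in>cone_subspace w0 W. gmet x y = 0"
  have "gmet x p1 = 0"
    using orth p1_in_cone_subspace[OF W] by blast
  then have s: "snd (snd x) = 0"
    by (simp add: gmet_def p1_def)
  then have "(0, fst (snd x), 0) \<in> cone_subspace w0 W"
    using x by (simp add: cone_subspace_def)
  then have "gmet x (0, fst (snd x), 0) = 0"
    using orth by blast
  then have w: "fst (snd x) = 0"
    using s by (simp add: gmet_def sum_mult_cnj_eq_norm)
  have "(0, w0, 1) \<in> cone_subspace w0 W"
    using W by (simp add: cone_subspace_def vec.subspace_0)
  then have "gmet x (0, w0, 1) = 0"
    using orth by blast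
  then have "fst x = 0"
    using s w by (simp add: gmet_def)
  with s w show "x = 0"
    by (simp add: prod_eq_iff)
qed

lemma U_p1_maps_cone_subspace:
  assumes f: "f \<in> U_p1" and W: "vec.subspace W"
    and stable: "\<forall>u\<in>W. phi f (w0 + u) - w0 \<in> W" and x: "x \<in> cone_subspace w0 W"
  shows "f x \<in> cone_subspace w0 W"
proof -
  interpret B: Vector_Spaces.linear "(*s)" "(*s)" "phi_linear f"
    using linear_phi_linear[OF U_p1_clinear_map[OF f]] .
  let ?a = "cnj (fst (f p1))"
  have BW: "phi_linear f u \<in> W" if "u \<in> W" for u
  proof -
    have "phi f (w0 + u) - w0 \<in> W" "phi f (w0 + 0) - w0 \<in> W"
      using stable that vec.subspace_0[OF W] by blast+
    then have "(phi f (w0 + u) - w0) - (phi f (w0 + 0) - w0) \<in> W"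
      by (rule vec.subspace_diff[OF W])
    then show ?thesis
      by (simp add: phi_eq[OF f] B.add)
  qed
  define u where "u = fst (snd x) - snd (snd x) *s w0"
  have u: "u \<in> W"
    using x by (simp add: cone_subspace_def u_def)
  have "?a *s (fst (snd (f x)) - snd (snd (f x)) *s w0)
          = phi_linear f u + snd (snd x) *s (phi f w0 - w0)"
    using U_p1_middle_coord[OF f, of x] U_p1_last_coord[OF f, of x]
    by (simp add: u_def phi_eq[OF f] B.diff B.scale algebra_simps)
  also have "\<dots> \<in> W"
  proof -
    have "phi f (w0 + 0) - w0 \<in> W"
      using stable vec.subspace_0[OF W] by blast
    then have "phi f w0 - w0 \<in> W"
      by simp
    with BW[OF u] show ?thesis
      by (intro vec.subspace_add[OF W] vec.subspace_scale[OF W])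
  qed
  finally have "inverse ?a *s (?a *s (fst (snd (f x)) - snd (snd (f x)) *s w0)) \<in> W"
    using W by (rule vec.subspace_scale[rotated])
  then show ?thesis
    using U_p1_fst_image_p1[OF f]
    by (simp add: cone_subspace_def mult.assoc[symmetric])
qed

lemma is_subgroup_U_image_eq:
  assumes G: "is_subgroup_U G" and stable: "\<forall>f\<in>G. f ` V \<subseteq> V"
  shows "\<forall>f\<in>G. f ` V = V"
proof
  fix f assume f: "f \<in> G"
  show "f ` V = V"
  proof
    show "f ` V \<subseteq> V"
      using stable f by blast
    show "V \<subseteq> f ` V"
    proof
      fix x assume "x \<in> V"
      then have "inv f x \<in> V"
        using stable is_subgroup_U_inv[OF G f] by blast
      moreover have "f (inv f x) = x"
        using U_p1_bij[OF is_subgroup_U_U_p1[OF G f]] by (simp add: bij_is_surj surj_f_inv_f)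
      ultimately show "x \<in> f ` V"
        by (metis imageI)
    qed
  qed
qed

lemma invariant_complex_affine_eq_UNIV:
  fixes G :: "('n::finite amb \<Rightarrow> 'n amb) set"
  assumes G: "is_subgroup_U G" and irr: "weakly_irreducible G"
    and L: "complex_affine L" and stable: "\<forall>f\<in>G. phi f ` L \<subseteq> L"
  shows "L = UNIV"
proof (rule ccontr)
  assume "L \<noteq> UNIV"
  then obtain z where z: "z \<notin> L" by blast
  have "L \<noteq> {}"
    using L by (simp add: complex_affine_def)
  then obtain w0 where w0: "w0 \<in> L"
    by blast
  define W where "W = {u. w0 + u \<in> L}"
  define U where "U = cone_subspace w0 W"
  have W: "vec.subspace W"
    unfolding W_def using L w0 by (rule complex_affine_translate_subspace)
  have "f ` U \<subseteq> U" if f: "f \<in> G" for f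
  proof -
    have "phi f (w0 + u) - w0 \<in> W" if "u \<in> W" for u
    proof -
      have "phi f (w0 + u) \<in> L"
        using stable f that unfolding W_def by blast
      then show ?thesis
        unfolding W_def by simp
    qed
    then show ?thesis
      unfolding U_def using U_p1_maps_cone_subspace[OF is_subgroup_U_U_p1[OF G f] W] by blast
  qed
  then have "\<forall>f\<in>G. f ` U = U"
    by (simp add: is_subgroup_U_image_eq[OF G])
  moreover have "U \<noteq> {0}"
  proof
    assume "U = {0}"
    moreover have "p1 \<in> U"
      unfolding U_def by (rule p1_in_cone_subspace[OF W])
    ultimately have "p1 = (0 :: 'n amb)"
      by simp
    then show False
      by (simp add: p1_def zero_prod_def)
  qed
  moreover have "(0, z, 1) \<notin> U"
    using z unfolding U_def cone_subspace_def W_def by simp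
  then have "U \<noteq> UNIV"
    by blast
  ultimately have "\<exists>V. csubspace_amb V \<and> V \<noteq> {0} \<and> V \<noteq> UNIV \<and> nondeg_on V
                      \<and> (\<forall>f\<in>G. f ` V = V)"
    using csubspace_amb_cone_subspace[OF W] nondeg_on_cone_subspace[OF W] unfolding U_def by blast
  with irr show False
    unfolding weakly_irreducible_def by blast
qed

lemma phi_image_complex_affine_hull_subset:
  assumes f: "f \<in> U_p1" and ne: "L \<noteq> {}" and stable: "phi f ` L \<subseteq> L"
  shows "phi f ` complex_affine_hull L \<subseteq> complex_affine_hull L"
proof -
  have phi_f: "phi f = (\<lambda>w. phi_linear f w + phi_translation f)"
    by (simp add: fun_eq_iff phi_eq[OF f])
  show ?thesis
    using complex_affine_hull_image_subset[OF linear_phi_linear[OF U_p1_clinear_map[OF f]] ne]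
      stable
    by (simp add: phi_f)
qed

theorem theorem2p5p1:
  fixes G :: "('n::finite amb \<Rightarrow> 'n amb) set"
  assumes "is_subgroup_U G"
    and "weakly_irreducible G"
  shows "(\<not> (\<exists>L. complex_affine L \<and> L \<noteq> UNIV \<and> (\<forall>f\<in>G. phi f ` L = L)))
       \<and> (\<forall>L. affine L \<and> L \<noteq> {} \<and> L \<noteq> UNIV \<and> \<not> complex_affine L
              \<and> (\<forall>f\<in>G. phi f ` L = L) \<longrightarrow> complex_affine_hull L = UNIV)"
proof (intro conjI allI impI notI)
  assume "\<exists>L. complex_affine L \<and> L \<noteq> UNIV \<and> (\<forall>f\<in>G. phi f ` L = L)"
  then obtain L where "complex_affine L" "L \<noteq> UNIV" "\<forall>f\<in>G. phi f ` L = L"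
    by blast
  then show False
    using invariant_complex_affine_eq_UNIV[OF assms, of L] by simp
next
  fix L :: "(complex ^ 'n) set"
  \<comment> \<open>of the hypotheses on L only nonemptiness and invariance are needed\<close>
  assume L: "affine L \<and> L \<noteq> {} \<and> L \<noteq> UNIV \<and> \<not> complex_affine L
               \<and> (\<forall>f\<in>G. phi f ` L = L)"
  have "phi f ` complex_affine_hull L \<subseteq> complex_affine_hull L" if "f \<in> G" for f
    using phi_image_complex_affine_hull_subset[OF is_subgroup_U_U_p1[OF assms(1) that]] L that
    by simp
  then show "complex_affine_hull L = UNIV"
    using invariant_complex_affine_eq_UNIV[OF assms complex_affine_complex_affine_hull] L by simp
qed

end
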